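(* Let $P\in\mathcal{P}$, $\alpha\in(0,1]$ and $Q\in P^\alpha$. Then, almost surely, $Q\in\liminf_n P_n^\alpha$; i.e. almost surely there exists a sequence $\{Q_n\}_n$ with $Q_n\in P_n^\alpha$ for all $n$ and $Q_n\to Q$ weakly.
   Context: $\mathcal{P}$ denotes the set of all probability measures on $(\mathbb{R}^d,\mathcal{B}_d)$, $\mathcal{B}_d$ the Borel $\sigma$-algebra, endowed with the topology of weak convergence. For $R\in\mathcal{P}$ and $\alpha\in(0,1]$, the $\alpha$-trimming of $R$ is $R^\alpha=\{Q\in\mathcal{P} : Q(B)\le \alpha^{-1}R(B)\text{ for all } B\in\mathcal{B}_d\}$. $\{X_i\}_{i\ge1}$ are i.i.d. random vectors in $\mathbb{R}^d$ with law $P$, and $P_n=\frac1n\sum_{i=1}^n\delta_{X_i}$ is the empirical probability. For sets $A_n\subset\mathcal{P}$, $\liminf_n A_n=\{Q\in\mathcal{P}:\exists\, Q_n\in A_n \text{ for all } n \text{ with } Q_n\to Q \text{ weakly}\}$ and $\limsup_n A_n=\{Q\in\mathcal{P}:\exists\, n_1<n_2<\dots,\ Q_{n_k}\in A_{n_k},\ Q_{n_k}\to Q\text{ weakly}\}$. *)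

theory Defs
  imports "HOL-Probability.Probability"
begin

text \<open>Probability measures on (R^d, Borel sets); R^d is modelled by an arbitrary
  Euclidean space type 'a.\<close>
definition prob_measures :: "'a::euclidean_space measure set" where
  "prob_measures = {Q. sets Q = sets (borel :: 'a measure) \<and> prob_space Q}"

definition trimming :: "'a::euclidean_space measure \<Rightarrow> real \<Rightarrow> 'a measure set" where
  "trimming R \<alpha> = {Q \<in> prob_measures.
      \<forall>B \<in> sets (borel :: 'a measure). measure Q B \<le> measure R B / \<alpha>}"

definition weakly_conv :: "(nat \<Rightarrow> 'a::euclidean_space measure) \<Rightarrow> 'a measure \<Rightarrow> bool" where
  "weakly_conv Qs Q \<longleftrightarrow> (\<forall>f :: 'a \<Rightarrow> real. continuous_on UNIV f \<and> bounded (range f) \<longrightarrow>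
      (\<lambda>n. integral\<^sup>L (Qs n) f) \<longlonglongrightarrow> integral\<^sup>L Q f)"

text \<open>Empirical measure P_n = (1/n) sum_{i<n} delta_{X_i(omega)} (observations indexed from 0).\<close>
definition empirical :: "(nat \<Rightarrow> 'w \<Rightarrow> 'a::euclidean_space) \<Rightarrow> nat \<Rightarrow> 'w \<Rightarrow> 'a measure" where
  "empirical X n \<omega> = measure_of UNIV (sets (borel :: 'a measure))
      (\<lambda>B. ennreal (real (card {i. i < n \<and> X i \<omega> \<in> B}) / real n))"

end

theory Submission
  imports Defs
begin

text \<open>
  By Radon--Nikodym, \<open>Q = g \<cdot> P\<close> with a density
  \<open>0 \<le> g \<le> 1/\<alpha>\<close>.  For \<open>\<alpha> < 1\<close> we give the \<open>i\<close>-th observation the weight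
  \<open>w\<^sub>i = (t/c \<cdot> g(X\<^sub>i) + (1 - t)) / n\<close>, where \<open>c\<close> is the sample mean of \<open>g\<close> and the
  mixing parameter \<open>t = mix_weight \<alpha> c \<in> [0,1]\<close> keeps every weight below \<open>1/(n\<alpha>)\<close>; the
  reweighted empirical measure is therefore an \<open>\<alpha>\<close>-trimming of \<open>P\<^sub>n\<close>.  Since \<open>c \<rightarrow> 1\<close> and
  \<open>t \<rightarrow> 1\<close>, its integral of a bounded continuous \<open>f\<close> tends to \<open>\<integral> f g dP = \<integral> f dQ\<close>,
  provided the sample means of \<open>f\<cdot>g\<close> and \<open>f\<close> converge for all such \<open>f\<close> simultaneously.
  For \<open>\<alpha> = 1\<close> we have \<open>Q = P\<close> and the empirical measures themselves work.

  The simultaneous convergence is the heart of the proof: the strong law of large numbers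
  for bounded functions (Hoeffding plus Borel--Cantelli) holds a.s. for the countably many
  indicators of the cells of a dense sequence at all meshes \<open>1/(m+1)\<close>; a deterministic
  sandwich argument then extends convergence of sample means from these cells to every
  bounded continuous \<open>f\<close>.
\<close>

definition sample_mean :: "(nat \<Rightarrow> 'a) \<Rightarrow> ('a \<Rightarrow> real) \<Rightarrow> nat \<Rightarrow> real" where
  "sample_mean p u n = (\<Sum>i<n. u (p i)) / real n"

lemma (in prob_space) AE_tendsto_of_summable_tail_probs:
  fixes Y :: "nat \<Rightarrow> 'a \<Rightarrow> real"
  assumes Ym[measurable]: "\<And>n. Y n \<in> borel_measurable M"
    and tails: "\<And>e. e > 0 \<Longrightarrow> summable (\<lambda>n. prob {\<omega>\<in>space M. e \<le> \<bar>Y n \<omega> - L\<bar>})"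
  shows "AE \<omega> in M. (\<lambda>n. Y n \<omega>) \<longlonglongrightarrow> L"
proof -
  define A where "A e n = {\<omega>\<in>space M. e \<le> \<bar>Y n \<omega> - L\<bar>}" for e n
  have "AE \<omega> in M. eventually (\<lambda>n. \<bar>Y n \<omega> - L\<bar> < 1 / real (Suc k)) sequentially" for k
  proof -
    have "AE \<omega> in M. eventually (\<lambda>n. \<omega> \<in> space M - A (1 / real (Suc k)) n) sequentially"
      by (rule borel_cantelli_AE1) (auto simp: A_def tails less_top[symmetric])
    then show ?thesis
      by eventually_elim (auto simp: A_def not_le elim: eventually_mono)
  qed
  then have "AE \<omega> in M. \<forall>k. eventually (\<lambda>n. \<bar>Y n \<omega> - L\<bar> < 1 / real (Suc k)) sequentially"
    by (simp add: AE_all_countable)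
  then show ?thesis
  proof eventually_elim
    case (elim \<omega>)
    show ?case
    proof (rule LIMSEQ_I)
      fix r :: real assume "r > 0"
      then obtain k where "1 / real (Suc k) < r" using nat_approx_posE by blast
      then show "\<exists>N. \<forall>n\<ge>N. norm (Y n \<omega> - L) < r"
        using elim[rule_format, of k] by (auto simp: eventually_sequentially) (meson less_trans)
    qed
  qed
qed

text \<open>The strong law of large numbers for a bounded function of i.i.d.\ observations, via the
  exponential tail bound of Hoeffding's inequality.\<close>
lemma (in prob_space) slln_bounded:
  fixes X :: "nat \<Rightarrow> 'a \<Rightarrow> 'd::euclidean_space" and u :: "'d \<Rightarrow> real"
  assumes ind: "indep_vars (\<lambda>_. borel) X UNIV"
    and Xm[measurable]: "\<And>i. X i \<in> borel_measurable M"
    and XP: "\<And>i. distr M borel (X i) = P"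
    and um[measurable]: "u \<in> borel_measurable borel" and ub: "\<And>x. \<bar>u x\<bar> \<le> K"
  shows "AE \<omega> in M. sample_mean (\<lambda>i. X i \<omega>) u \<longlonglongrightarrow> (\<integral>x. u x \<partial>P)"
proof -
  define Y where "Y i \<omega> = u (X i \<omega>)" for i \<omega>
  have Ym[measurable]: "Y i \<in> borel_measurable M" for i
    unfolding Y_def by measurable
  have distr_Y: "distr M borel (Y i) = distr P borel u" for i
    unfolding Y_def XP[of i, symmetric] by (subst distr_distr) (auto simp: comp_def)
  have mean_Y: "expectation (Y 0) = (\<integral>x. u x \<partial>P)"
    unfolding Y_def XP[of 0, symmetric] by (subst integral_distr) auto
  define c where "c = K + 1"
  have c: "0 < c" unfolding c_def using ub[of 0] by linarith
  have hoeffding: "prob {\<omega>\<in>space M. e \<le> \<bar>sample_mean (\<lambda>i. X i \<omega>) u (Suc n) - (\<integral>x. u x \<partial>P)\<bar>}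
      \<le> 2 * exp (-2 * e\<^sup>2 / (2 * c)\<^sup>2) ^ Suc n" if e: "e \<ge> 0" for e n
  proof -
    interpret H: Hoeffding_ineq_iid M "{..<Suc n}" Y "Y 0" "-c" c "expectation (Y 0)"
    proof unfold_locales
      show "AE x in M. Y 0 x \<in> {-c..c}"
      proof (rule AE_I2)
        fix x show "Y 0 x \<in> {-c..c}" using ub[of "X 0 x"] unfolding Y_def c_def by auto
      qed
      show "indep_vars (\<lambda>_. borel) Y {..<Suc n}"
        unfolding Y_def by (rule indep_vars_subset[OF indep_vars_compose2[OF ind]]) auto
    qed (simp_all add: distr_Y)
    have "-c < c" "{..<Suc n} \<noteq> {}" using c by auto
    from H.Hoeffding_ineq_abs_ge'[OF e this]
    have "prob {\<omega>\<in>space M. e \<le> \<bar>sample_mean (\<lambda>i. X i \<omega>) u (Suc n) - (\<integral>x. u x \<partial>P)\<bar>}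
        \<le> 2 * exp (-2 * real (Suc n) * e\<^sup>2 / (2 * c)\<^sup>2)"
      by (simp add: sample_mean_def Y_def mean_Y)
    also have "-2 * real (Suc n) * e\<^sup>2 / (2 * c)\<^sup>2 = real (Suc n) * (-2 * e\<^sup>2 / (2 * c)\<^sup>2)"
      by (simp only: times_divide_eq_right mult.assoc mult.commute[of "-2"])
    finally show ?thesis by (simp only: exp_of_nat_mult)
  qed
  have "AE \<omega> in M. (\<lambda>n. sample_mean (\<lambda>i. X i \<omega>) u (Suc n)) \<longlonglongrightarrow> (\<integral>x. u x \<partial>P)"
  proof (rule AE_tendsto_of_summable_tail_probs)
    show "(\<lambda>\<omega>. sample_mean (\<lambda>i. X i \<omega>) u (Suc n)) \<in> borel_measurable M" for n
      unfolding sample_mean_def by measurable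
    fix e :: real assume "e > 0"
    have "exp (-2 * e\<^sup>2 / (2 * c)\<^sup>2) < 1" using \<open>e > 0\<close> c by simp
    then have "summable (\<lambda>n. 2 * exp (-2 * e\<^sup>2 / (2 * c)\<^sup>2) ^ Suc n)"
      by (intro summable_mult summable_Suc_iff[THEN iffD2] summable_geometric) auto
    then show "summable (\<lambda>n. prob {\<omega>\<in>space M. e \<le> \<bar>sample_mean (\<lambda>i. X i \<omega>) u (Suc n) - (\<integral>x. u x \<partial>P)\<bar>})"
      by (rule summable_comparison_test'[where N=0]) (use hoeffding \<open>e > 0\<close> in auto)
  qed
  then show ?thesis by (auto elim: AE_mp intro: LIMSEQ_imp_Suc)
qed

definition mean_convergent :: "'a measure \<Rightarrow> (nat \<Rightarrow> 'a) \<Rightarrow> ('a \<Rightarrow> real) \<Rightarrow> bool" where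
  "mean_convergent P p u \<longleftrightarrow> integrable P u \<and> sample_mean p u \<longlonglongrightarrow> (\<integral>x. u x \<partial>P)"

lemma sample_mean_cmult: "sample_mean p (\<lambda>x. c * u x) n = c * sample_mean p u n"
  by (simp add: sample_mean_def sum_distrib_left)

lemma sample_mean_add: "sample_mean p (\<lambda>x. u x + v x) n = sample_mean p u n + sample_mean p v n"
  by (simp add: sample_mean_def sum.distrib add_divide_distrib)

lemma mean_convergent_cmult:
  "mean_convergent P p u \<Longrightarrow> mean_convergent P p (\<lambda>x. c * u x)"
  unfolding mean_convergent_def sample_mean_cmult by (simp add: tendsto_mult_left)

lemma mean_convergent_add:
  "mean_convergent P p u \<Longrightarrow> mean_convergent P p v \<Longrightarrow> mean_convergent P p (\<lambda>x. u x + v x)"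
  unfolding mean_convergent_def sample_mean_add by (simp add: tendsto_add)

lemma mean_convergent_sum:
  "finite G \<Longrightarrow> (\<And>j. j \<in> G \<Longrightarrow> mean_convergent P p (u j)) \<Longrightarrow>
    mean_convergent P p (\<lambda>x. \<Sum>j\<in>G. u j x)"
proof (induction G rule: finite_induct)
  case empty
  then show ?case by (simp add: mean_convergent_def sample_mean_def[abs_def])
next
  case (insert j G)
  then show ?case by (simp add: mean_convergent_add)
qed

lemma mean_convergent_sandwich:
  assumes f: "integrable P f"
    and approx: "\<And>e. e > 0 \<Longrightarrow> \<exists>\<phi> \<psi>. mean_convergent P p \<phi> \<and> mean_convergent P p \<psi> \<and>
        (\<forall>x. \<bar>f x - \<phi> x\<bar> \<le> \<psi> x) \<and> (\<integral>x. \<psi> x \<partial>P) < e"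
  shows "mean_convergent P p f"
  unfolding mean_convergent_def
proof (intro conjI f LIMSEQ_I)
  fix r :: real assume "r > 0"
  then obtain \<phi> \<psi> where \<phi>: "mean_convergent P p \<phi>" and \<psi>: "mean_convergent P p \<psi>"
    and bound: "\<And>x. \<bar>f x - \<phi> x\<bar> \<le> \<psi> x" and small: "(\<integral>x. \<psi> x \<partial>P) < r / 4"
    using approx[of "r / 4"] by auto
  have int_bound: "\<bar>(\<integral>x. f x \<partial>P) - (\<integral>x. \<phi> x \<partial>P)\<bar> \<le> (\<integral>x. \<psi> x \<partial>P)"
  proof -
    have "\<bar>(\<integral>x. f x \<partial>P) - (\<integral>x. \<phi> x \<partial>P)\<bar> = \<bar>\<integral>x. f x - \<phi> x \<partial>P\<bar>"
      using f \<phi> by (simp add: mean_convergent_def)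
    also have "\<dots> \<le> (\<integral>x. \<bar>f x - \<phi> x\<bar> \<partial>P)"
      by (rule integral_abs_bound)
    also have "\<dots> \<le> (\<integral>x. \<psi> x \<partial>P)"
      using f \<phi> \<psi> bound by (intro integral_mono) (auto simp: mean_convergent_def)
    finally show ?thesis .
  qed
  have mean_bound: "\<bar>sample_mean p f n - sample_mean p \<phi> n\<bar> \<le> sample_mean p \<psi> n" for n
  proof -
    have "\<bar>\<Sum>i<n. f (p i) - \<phi> (p i)\<bar> \<le> (\<Sum>i<n. \<psi> (p i))"
      by (rule order_trans[OF sum_abs sum_mono]) (rule bound)
    then show ?thesis
      by (simp add: sample_mean_def sum_subtractf diff_divide_distrib[symmetric] divide_right_mono)
  qed
  have "(\<lambda>n. \<bar>sample_mean p \<phi> n - (\<integral>x. \<phi> x \<partial>P)\<bar>) \<longlonglongrightarrow> 0"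
    using \<phi> by (simp add: mean_convergent_def tendsto_rabs_zero_iff LIM_zero_iff)
  moreover have "sample_mean p \<psi> \<longlonglongrightarrow> (\<integral>x. \<psi> x \<partial>P)"
    using \<psi> by (simp add: mean_convergent_def)
  ultimately have "eventually (\<lambda>n. \<bar>sample_mean p \<phi> n - (\<integral>x. \<phi> x \<partial>P)\<bar> < r / 4 \<and>
      sample_mean p \<psi> n < (\<integral>x. \<psi> x \<partial>P) + r / 4) sequentially"
    using \<open>r > 0\<close> by (intro eventually_conj order_tendstoD(2)) auto
  then obtain N where N: "\<And>n. n \<ge> N \<Longrightarrow> \<bar>sample_mean p \<phi> n - (\<integral>x. \<phi> x \<partial>P)\<bar> < r / 4 \<and>
      sample_mean p \<psi> n < (\<integral>x. \<psi> x \<partial>P) + r / 4"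
    by (auto simp: eventually_sequentially)
  show "\<exists>N. \<forall>n\<ge>N. norm (sample_mean p f n - (\<integral>x. f x \<partial>P)) < r"
  proof (intro exI allI impI)
    fix n assume "n \<ge> N"
    with N[of n] mean_bound[of n] int_bound small
    show "norm (sample_mean p f n - (\<integral>x. f x \<partial>P)) < r"
      unfolding real_norm_def abs_less_iff abs_le_iff by linarith
  qed
qed

definition cell :: "(nat \<Rightarrow> 'a::metric_space) \<Rightarrow> real \<Rightarrow> nat \<Rightarrow> 'a set" where
  "cell q r j = ball (q j) r - (\<Union>i<j. ball (q i) r)"

lemma cell_subset_ball: "cell q r j \<subseteq> ball (q j) r"
  unfolding cell_def by auto

lemma disjoint_family_cell: "disjoint_family (cell q r)"
  unfolding disjoint_family_on_def cell_def by (auto simp: lessThan_def) (meson linorder_neqE_nat)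

lemma cell_cover:
  assumes "\<exists>j. dist (q j) x < r"
  shows "\<exists>j. x \<in> cell q r j"
proof -
  define j where "j = (LEAST j. dist (q j) x < r)"
  have "dist (q j) x < r" unfolding j_def by (rule LeastI_ex) (rule assms)
  moreover have "\<not> dist (q i) x < r" if "i < j" for i
    using not_less_Least[OF that[unfolded j_def]] .
  ultimately show ?thesis unfolding cell_def by (intro exI[of _ j]) (auto simp: dist_commute)
qed

lemma cell_borel[measurable]: "cell q r j \<in> sets borel"
  unfolding cell_def by (intro sets.Diff sets.countable_UN' borel_open) auto

lemma eventually_cell_oscillation_small:
  fixes f :: "'a::metric_space \<Rightarrow> real"
  assumes f: "isCont f x" and e: "e > 0"
  shows "eventually (\<lambda>m. \<forall>j. x \<in> cell q (1 / Suc m) j \<longrightarrow>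
           (\<forall>y\<in>cell q (1 / Suc m) j. \<bar>f y - f (q j)\<bar> \<le> e)) sequentially"
proof -
  obtain \<delta> where \<delta>: "\<delta> > 0" and cont: "\<And>y. dist y x < \<delta> \<Longrightarrow> \<bar>f y - f x\<bar> < e / 2"
    using f e unfolding continuous_at_eps_delta dist_real_def by (metis half_gt_zero)
  have "(\<lambda>m. 1 / real (Suc m)) \<longlonglongrightarrow> 0"
    using LIMSEQ_Suc[OF lim_1_over_n] by simp
  then have "eventually (\<lambda>m. 1 / real (Suc m) < \<delta> / 2) sequentially"
    using \<delta> by (intro order_tendstoD(2)) auto
  then show ?thesis
  proof eventually_elim
    case (elim m)
    show ?case
    proof (intro allI impI ballI)
      fix j y assume x: "x \<in> cell q (1 / Suc m) j" and y: "y \<in> cell q (1 / Suc m) j"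
      have "dist (q j) x < \<delta> / 2" "dist (q j) y < \<delta> / 2"
        using x y elim cell_subset_ball[of q "1 / Suc m" j] by auto
      then have "dist y x < \<delta>" "dist (q j) x < \<delta>"
        using dist_triangle3[of y x "q j"] zero_le_dist[of "q j" x] by linarith+
      then show "\<bar>f y - f (q j)\<bar> \<le> e"
        using cont[of y] cont[of "q j"] by linarith
    qed
  qed
qed

lemma integral_indicator_tendsto:
  fixes h :: "'a \<Rightarrow> real"
  assumes h: "integrable P h" and A[measurable]: "\<And>k. A k \<in> sets P" and B[measurable]: "B \<in> sets P"
    and conv: "\<And>x. eventually (\<lambda>k. x \<in> A k \<longleftrightarrow> x \<in> B) sequentially"
  shows "(\<lambda>k. \<integral>x. indicator (A k) x * h x \<partial>P) \<longlonglongrightarrow> (\<integral>x. indicator B x * h x \<partial>P)"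
proof (rule integral_dominated_convergence[where w="\<lambda>x. \<bar>h x\<bar>"])
  show "AE x in P. (\<lambda>k. indicator (A k) x * h x) \<longlonglongrightarrow> indicator B x * h x"
  proof (rule AE_I2)
    fix x
    from conv[of x] have "eventually (\<lambda>k. indicator (A k) x * h x = indicator B x * h x) sequentially"
      by (rule eventually_mono) (simp add: indicator_def)
    then show "(\<lambda>k. indicator (A k) x * h x) \<longlonglongrightarrow> indicator B x * h x"
      by (rule tendsto_eventually)
  qed
qed (use h in \<open>auto simp: indicator_def\<close>)

lemma cell_approximation:
  fixes f h :: "'a::metric_space \<Rightarrow> real" and P :: "'a measure"
  assumes sets_P[measurable_cong]: "sets P = sets borel" and h: "integrable P h"
    and f: "continuous_on UNIV f" and dense: "\<And>x r. r > 0 \<Longrightarrow> \<exists>j. dist (q j) x < r"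
    and e: "e > 0"
  shows "\<exists>m G. finite G \<and> (\<forall>j\<in>G. \<forall>y\<in>cell q (1 / Suc m) j. \<bar>f y - f (q j)\<bar> \<le> e) \<and>
           (\<integral>x. indicator (- (\<Union>j\<in>G. cell q (1 / Suc m) j)) x * h x \<partial>P) < e"
proof -
  define C where "C m = cell q (1 / Suc m)" for m
  define good where "good m j \<longleftrightarrow> (\<forall>y\<in>C m j. \<bar>f y - f (q j)\<bar> \<le> e)" for m j
  define bad where "bad m = (\<Union>j\<in>{j. \<not> good m j}. C m j)" for m
  have cover: "\<exists>j. x \<in> C m j" for m x
    unfolding C_def by (rule cell_cover) (rule dense, simp)
  have disj: "i = j" if "x \<in> C m i" "x \<in> C m j" for x m i j
    using disjoint_family_cell that unfolding C_def disjoint_family_on_def by blast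
  have [measurable]: "C m j \<in> sets borel" "bad m \<in> sets borel" for m j
    unfolding bad_def C_def by measurable
  text \<open>Every point eventually lies in a good cell, so the bad cells carry vanishing mass.\<close>
  have "(\<lambda>m. \<integral>x. indicator (bad m) x * h x \<partial>P) \<longlonglongrightarrow> (\<integral>x. indicator {} x * h x \<partial>P)"
  proof (rule integral_indicator_tendsto[OF h])
    fix x
    have "isCont f x" using f by (simp add: continuous_on_eq_continuous_at)
    from eventually_cell_oscillation_small[OF this e]
    show "eventually (\<lambda>m. x \<in> bad m \<longleftrightarrow> x \<in> {}) sequentially"
      by (rule eventually_mono) (auto simp: bad_def good_def C_def dest: disj[unfolded C_def])
  qed auto
  then have "eventually (\<lambda>m. (\<integral>x. indicator (bad m) x * h x \<partial>P) < e) sequentially"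
    using e by (intro order_tendstoD(2)) auto
  then obtain m where m: "(\<integral>x. indicator (bad m) x * h x \<partial>P) < e"
    by (auto simp: eventually_sequentially)
  text \<open>Finitely many good cells already cover everything but a set of mass close to the bad one.\<close>
  define R where "R J = - (\<Union>j\<in>{j. j < J \<and> good m j}. C m j)" for J
  have "(\<lambda>J. \<integral>x. indicator (R J) x * h x \<partial>P) \<longlonglongrightarrow> (\<integral>x. indicator (bad m) x * h x \<partial>P)"
  proof (rule integral_indicator_tendsto[OF h])
    fix x
    obtain j where j: "x \<in> C m j" using cover by blast
    have in_R: "x \<in> R J \<longleftrightarrow> \<not> (j < J \<and> good m j)" for J
      using j disj unfolding R_def by blast
    have in_bad: "x \<in> bad m \<longleftrightarrow> \<not> good m j"
      using j disj unfolding bad_def by blast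
    show "eventually (\<lambda>J. x \<in> R J \<longleftrightarrow> x \<in> bad m) sequentially"
      unfolding in_R in_bad eventually_sequentially by (intro exI[of _ "Suc j"]) auto
  qed (unfold R_def Compl_eq_Diff_UNIV, measurable)
  then have "eventually (\<lambda>J. (\<integral>x. indicator (R J) x * h x \<partial>P) < e) sequentially"
    using m by (intro order_tendstoD(2)) auto
  then obtain J where "(\<integral>x. indicator (R J) x * h x \<partial>P) < e"
    by (auto simp: eventually_sequentially)
  then show ?thesis
    by (intro exI[of _ m] exI[of _ "{j. j < J \<and> good m j}"]) (auto simp: R_def C_def good_def)
qed

lemma mean_convergent_bounded_continuous:
  fixes P :: "'a::metric_space measure" and h f :: "'a \<Rightarrow> real"
  assumes sets_P[measurable_cong]: "sets P = sets borel"
    and h: "mean_convergent P p h" and h_nonneg: "\<And>x. 0 \<le> h x"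
    and dense: "\<And>x r. r > 0 \<Longrightarrow> \<exists>j. dist (q j) x < r"
    and cells: "\<And>m j. mean_convergent P p (\<lambda>x. indicator (cell q (1 / Suc m) j) x * h x)"
    and f_cont: "continuous_on UNIV f" and f_bdd: "bounded (range f)"
  shows "mean_convergent P p (\<lambda>x. f x * h x)"
proof -
  have h_int: "integrable P h" using h by (simp add: mean_convergent_def)
  have [measurable]: "h \<in> borel_measurable borel"
    using borel_measurable_integrable[OF h_int] by (simp add: measurable_cong_sets[OF sets_P refl])
  have [measurable]: "f \<in> borel_measurable borel"
    using f_cont by (rule borel_measurable_continuous_onI)
  obtain B where B: "\<And>x. \<bar>f x\<bar> \<le> B"
    using f_bdd by (auto simp: bounded_iff)
  have B_nonneg: "0 \<le> B" using B[of undefined] by linarith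
  show ?thesis
  proof (rule mean_convergent_sandwich)
    show "integrable P (\<lambda>x. f x * h x)"
      by (rule Bochner_Integration.integrable_bound[where f="\<lambda>x. B * h x"])
         (use h_int B h_nonneg B_nonneg in \<open>auto simp: abs_mult intro!: AE_I2 mult_right_mono\<close>)
    fix e :: real assume "e > 0"
    define d where "d = e / ((\<integral>x. h x \<partial>P) + B + 1)"
    have int_h_nonneg: "0 \<le> (\<integral>x. h x \<partial>P)" using h_nonneg by simp
    have d: "0 < d" "d * ((\<integral>x. h x \<partial>P) + B + 1) = e"
      using \<open>e > 0\<close> int_h_nonneg B_nonneg by (auto simp: d_def)
    obtain m G where G: "finite G" and osc: "\<And>j y. j \<in> G \<Longrightarrow> y \<in> cell q (1 / Suc m) j \<Longrightarrow> \<bar>f y - f (q j)\<bar> \<le> d"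
      and rest: "(\<integral>x. indicator (- (\<Union>j\<in>G. cell q (1 / Suc m) j)) x * h x \<partial>P) < d"
      using cell_approximation[OF sets_P h_int f_cont dense d(1)] by blast
    define C where "C j = cell q (1 / Suc m) j" for j
    define U where "U = (\<Union>j\<in>G. C j)"
    have [measurable]: "C j \<in> sets borel" "U \<in> sets borel" for j
      unfolding U_def C_def by measurable
    have ind_U: "indicator U x = (\<Sum>j\<in>G. indicator (C j) x :: real)" for x
      unfolding U_def C_def by (rule indicator_UN_disjoint[OF G disjoint_family_on_mono[OF _ disjoint_family_cell]]) auto
    define \<phi> where "\<phi> x = (\<Sum>j\<in>G. f (q j) * (indicator (C j) x * h x))" for x
    define \<psi> where "\<psi> x = d * h x + B * (indicator (- U) x * h x)" for x
    have \<phi>: "mean_convergent P p \<phi>"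
      unfolding \<phi>_def C_def by (intro mean_convergent_sum mean_convergent_cmult cells G)
    have \<psi>: "mean_convergent P p \<psi>"
    proof -
      have "indicator (- U) x * h x = h x + (\<Sum>j\<in>G. (-1) * (indicator (C j) x * h x))" for x
        by (simp add: indicator_compl ind_U algebra_simps sum_distrib_left sum_distrib_right sum_negf)
      then show ?thesis
        unfolding \<psi>_def C_def
        by (simp only:) (intro mean_convergent_add mean_convergent_cmult mean_convergent_sum cells h G)
    qed
    have "\<bar>f x * h x - \<phi> x\<bar> \<le> \<psi> x" for x
    proof (cases "x \<in> U")
      case True
      then obtain j where j: "j \<in> G" "x \<in> C j" unfolding U_def by blast
      have "\<phi> x = (\<Sum>i\<in>G. f (q i) * indicator (C i) x) * h x"
        by (simp add: \<phi>_def sum_distrib_right mult.assoc)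
      also have "\<dots> = f (q j) * h x"
        using sum_indicator_disjoint_family[OF disjoint_family_on_mono[OF _ disjoint_family_cell] j(2)[unfolded C_def] G j(1), of "\<lambda>i. f (q i)"]
        by (simp add: C_def)
      finally have "\<phi> x = f (q j) * h x" .
      then have "\<bar>f x * h x - \<phi> x\<bar> = \<bar>f x - f (q j)\<bar> * h x"
        by (simp add: h_nonneg abs_mult left_diff_distrib[symmetric])
      also have "\<dots> \<le> d * h x"
        using osc[OF j(1)] j(2) h_nonneg by (intro mult_right_mono) (auto simp: C_def)
      finally show ?thesis using True by (simp add: \<psi>_def)
    next
      case False
      then have "\<phi> x = 0" unfolding \<phi>_def U_def by (auto intro!: sum.neutral)
      moreover have "\<bar>f x\<bar> * h x \<le> B * h x"
        using B[of x] h_nonneg[of x] by (rule mult_right_mono)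
      moreover have "0 \<le> d * h x"
        using d(1) h_nonneg[of x] by simp
      ultimately show ?thesis
        using False h_nonneg[of x] by (simp add: \<psi>_def abs_mult)
    qed
    moreover have "(\<integral>x. \<psi> x \<partial>P) < e"
    proof -
      have "- U \<in> sets P" unfolding Compl_eq_Diff_UNIV by measurable
      then have "integrable P (\<lambda>x. indicator (- U) x * h x)"
        using integrable_mult_indicator[OF _ h_int] by simp
      then have "(\<integral>x. \<psi> x \<partial>P) = d * (\<integral>x. h x \<partial>P) + B * (\<integral>x. indicator (- U) x * h x \<partial>P)"
        using h_int by (simp add: \<psi>_def)
      also have "\<dots> \<le> d * (\<integral>x. h x \<partial>P) + B * d"
        using rest B_nonneg by (simp add: U_def C_def mult_left_mono)
      also have "\<dots> < e"
        using d B_nonneg int_h_nonneg by (simp add: algebra_simps)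
      finally show ?thesis .
    qed
    ultimately show "\<exists>\<phi> \<psi>. mean_convergent P p \<phi> \<and> mean_convergent P p \<psi> \<and>
        (\<forall>x. \<bar>f x * h x - \<phi> x\<bar> \<le> \<psi> x) \<and> (\<integral>x. \<psi> x \<partial>P) < e"
      using \<phi> \<psi> by blast
  qed
qed

lemma dense_sequence_exists:
  obtains q :: "nat \<Rightarrow> 'a::{metric_space, second_countable_topology}"
  where "\<And>x r. r > 0 \<Longrightarrow> \<exists>j. dist (q j) x < r"
proof -
  obtain D :: "'a set" where D: "countable D" "\<And>U. open U \<Longrightarrow> U \<noteq> {} \<Longrightarrow> \<exists>d\<in>D. d \<in> U"
    using countable_dense_setE by blast
  have "\<exists>j. dist (from_nat_into D j) x < r" if r: "r > 0" for x r
  proof -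
    obtain d where "d \<in> D" "d \<in> ball x r" using D(2)[of "ball x r"] r by auto
    moreover obtain j where "from_nat_into D j = d" using from_nat_into_surj[OF D(1) \<open>d \<in> D\<close>] by blast
    ultimately show ?thesis by (auto simp: dist_commute)
  qed
  then show ?thesis by (rule that)
qed

text \<open>Almost surely, the weighted sample means converge for all bounded continuous \<open>f\<close> at once:
  only countably many cell indicators need the strong law.\<close>
lemma (in prob_space) AE_sample_mean_tendsto_bounded_continuous:
  fixes X :: "nat \<Rightarrow> 'a \<Rightarrow> 'd::euclidean_space" and h :: "'d \<Rightarrow> real"
  assumes ind: "indep_vars (\<lambda>_. borel) X UNIV"
    and Xm[measurable]: "\<And>i. X i \<in> borel_measurable M"
    and XP: "\<And>i. distr M borel (X i) = P"
    and h[measurable]: "h \<in> borel_measurable borel" and h_nonneg: "\<And>x. 0 \<le> h x" and h_bdd: "\<And>x. h x \<le> H"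
  shows "AE \<omega> in M. \<forall>f. continuous_on UNIV f \<and> bounded (range f) \<longrightarrow>
           sample_mean (\<lambda>i. X i \<omega>) (\<lambda>x. f x * h x) \<longlonglongrightarrow> (\<integral>x. f x * h x \<partial>P)"
proof -
  have sets_P: "sets P = sets borel" using XP[of 0] by auto
  interpret P: prob_space P using XP[of 0] prob_space_distr[OF Xm] by metis
  have slln: "AE \<omega> in M. mean_convergent P (\<lambda>i. X i \<omega>) u"
    if [measurable]: "u \<in> borel_measurable borel" and u: "\<And>x. \<bar>u x\<bar> \<le> K" for u K
  proof -
    have "integrable P u"
      by (rule P.integrable_const_bound[where B=K]) (auto simp: u measurable_cong_sets[OF sets_P refl])
    then show ?thesis
      using slln_bounded[OF ind Xm XP that] by (simp add: mean_convergent_def)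
  qed
  obtain q :: "nat \<Rightarrow> 'd" where dense: "\<And>x r. r > 0 \<Longrightarrow> \<exists>j. dist (q j) x < r"
    using dense_sequence_exists by blast
  have bdd: "\<bar>h x\<bar> \<le> H" "\<bar>indicator A x * h x\<bar> \<le> H" for A x
    using h_nonneg[of x] h_bdd[of x] by (auto simp: indicator_def)
  have "AE \<omega> in M. mean_convergent P (\<lambda>i. X i \<omega>) (\<lambda>x. indicator (cell q (1 / Suc m) j) x * h x)" for m j
    by (rule slln[of _ H]) (simp_all add: bdd(2))
  then have "AE \<omega> in M. \<forall>m j. mean_convergent P (\<lambda>i. X i \<omega>) (\<lambda>x. indicator (cell q (1 / Suc m) j) x * h x)"
    by (simp add: AE_all_countable)
  moreover have "AE \<omega> in M. mean_convergent P (\<lambda>i. X i \<omega>) h"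
    by (rule slln[of _ H]) (simp_all add: bdd(1))
  ultimately show ?thesis
  proof eventually_elim
    case (elim \<omega>)
    show ?case
    proof (intro allI impI)
      fix f :: "'d \<Rightarrow> real" assume f: "continuous_on UNIV f \<and> bounded (range f)"
      have "mean_convergent P (\<lambda>i. X i \<omega>) (\<lambda>x. f x * h x)"
        using f by (intro mean_convergent_bounded_continuous[OF sets_P elim(2) h_nonneg dense elim(1)[rule_format]]) auto
      then show "sample_mean (\<lambda>i. X i \<omega>) (\<lambda>x. f x * h x) \<longlonglongrightarrow> (\<integral>x. f x * h x \<partial>P)"
        by (simp add: mean_convergent_def)
    qed
  qed
qed

lemma (in finite_measure) AE_le_if_density_le:
  fixes f :: "'a \<Rightarrow> ennreal"
  assumes f[measurable]: "f \<in> borel_measurable M" and c: "0 \<le> c"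
    and le: "\<And>A. A \<in> sets M \<Longrightarrow> emeasure (density M f) A \<le> ennreal c * emeasure M A"
  shows "AE x in M. f x \<le> ennreal c"
proof (rule AE_upper_bound_inf_ennreal)
  fix e :: real assume e: "e > 0"
  define B where "B = {x\<in>space M. ennreal (c + e) < f x}"
  have B[measurable]: "B \<in> sets M" unfolding B_def by measurable
  have "ennreal ((c + e) * measure M B) = (\<integral>\<^sup>+x. ennreal (c + e) * indicator B x \<partial>M)"
    using c e by (simp add: nn_integral_cmult_indicator emeasure_eq_measure ennreal_mult)
  also have "\<dots> \<le> (\<integral>\<^sup>+x. f x * indicator B x \<partial>M)"
    by (intro nn_integral_mono) (auto simp: B_def indicator_def less_imp_le)
  also have "\<dots> = emeasure (density M f) B"
    by (simp add: emeasure_density)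
  also have "\<dots> \<le> ennreal (c * measure M B)"
    using le[OF B] c by (simp add: emeasure_eq_measure ennreal_mult)
  finally have "(c + e) * measure M B \<le> c * measure M B"
    using c by (simp add: ennreal_le_iff)
  then have "measure M B = 0"
    using e measure_nonneg[of M B] by (simp add: algebra_simps mult_le_0_iff)
  then have "B \<in> null_sets M"
    using B by (simp add: null_sets_def emeasure_eq_measure)
  then have "AE x in M. x \<notin> B"
    by (rule AE_not_in)
  moreover have "ennreal c + ennreal e = ennreal (c + e)"
    using c e by (simp add: ennreal_plus)
  ultimately show "AE x in M. f x \<le> ennreal c + ennreal e"
    by (auto simp: B_def not_less elim!: AE_mp intro!: AE_I2)
qed

lemma trimming_one_eq:
  assumes P: "P \<in> prob_measures" and Q: "Q \<in> trimming P 1"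
  shows "Q = P"
proof (rule measure_eqI)
  have sets_P: "sets P = sets borel" and sets_Q: "sets Q = sets borel"
    and Q_le: "\<And>B. B \<in> sets borel \<Longrightarrow> measure Q B \<le> measure P B"
    using P Q by (auto simp: trimming_def prob_measures_def)
  interpret P: prob_space P using P by (simp add: prob_measures_def)
  interpret Q: prob_space Q using Q by (simp add: trimming_def prob_measures_def)
  show "sets Q = sets P" using sets_P sets_Q by simp
  fix A assume "A \<in> sets Q"
  then have A: "A \<in> sets borel" "- A \<in> sets borel" using sets_Q by auto
  have "space P = UNIV" "space Q = UNIV"
    using sets_eq_imp_space_eq[of P borel] sets_eq_imp_space_eq[of Q borel] sets_P sets_Q by auto
  text \<open>Both measures have mass one, so domination on \<open>A\<close> and on its complement forces equality.\<close>
  then have "measure Q (- A) = 1 - measure Q A" "measure P (- A) = 1 - measure P A"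
    using Q.prob_compl[of A] P.prob_compl[of A] A sets_P sets_Q by (auto simp: Compl_eq_Diff_UNIV)
  then have "measure Q A = measure P A"
    using Q_le[OF A(1)] Q_le[OF A(2)] by linarith
  then show "emeasure Q A = emeasure P A"
    by (simp add: Q.emeasure_eq_measure P.emeasure_eq_measure)
qed

lemma trimming_density:
  assumes P: "P \<in> prob_measures" and \<alpha>: "0 < \<alpha>" and Q: "Q \<in> trimming P \<alpha>"
  obtains g where "g \<in> borel_measurable borel" "\<And>x. 0 \<le> g x" "\<And>x. g x \<le> 1 / \<alpha>"
    "Q = density P (\<lambda>x. ennreal (g x))"
proof -
  have sets_P[measurable_cong]: "sets P = sets borel" and sets_Q: "sets Q = sets borel"
    and Q_le: "\<And>B. B \<in> sets borel \<Longrightarrow> measure Q B \<le> measure P B / \<alpha>"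
    using P Q by (auto simp: trimming_def prob_measures_def)
  interpret P: prob_space P using P by (simp add: prob_measures_def)
  interpret Q: prob_space Q using Q by (simp add: trimming_def prob_measures_def)
  have Q_le': "emeasure Q A \<le> ennreal (1 / \<alpha>) * emeasure P A" if "A \<in> sets P" for A
    using Q_le[of A] that \<alpha> sets_P
    by (simp add: Q.emeasure_eq_measure P.emeasure_eq_measure ennreal_mult[symmetric] ennreal_leI)
  have "absolutely_continuous P Q"
    unfolding absolutely_continuous_def
  proof
    fix A assume "A \<in> null_sets P"
    then show "A \<in> null_sets Q"
      using Q_le'[of A] sets_P sets_Q by (auto simp: null_sets_def)
  qed
  then obtain f where f[measurable]: "f \<in> borel_measurable P" and Q_eq: "density P f = Q"
    using P.Radon_Nikodym[of Q] sets_P sets_Q by auto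
  text \<open>The density is essentially bounded by \<open>1/\<alpha>\<close>; truncate it to make the bound hold everywhere.\<close>
  have f_le: "AE x in P. f x \<le> ennreal (1 / \<alpha>)"
    using \<alpha> by (intro P.AE_le_if_density_le f) (auto simp: Q_eq Q_le')
  define g where "g x = min (enn2real (f x)) (1 / \<alpha>)" for x
  have [measurable]: "g \<in> borel_measurable borel"
    using f unfolding g_def measurable_cong_sets[OF sets_P refl] by measurable
  have "density P f = density P (\<lambda>x. ennreal (g x))"
  proof (rule density_cong[OF f])
    show "(\<lambda>x. ennreal (g x)) \<in> borel_measurable P" by measurable
    show "AE x in P. f x = ennreal (g x)"
      using f_le
    proof eventually_elim
      case (elim x)
      then have "f x = ennreal (enn2real (f x))"
        using le_less_trans[OF _ ennreal_less_top] by (simp add: ennreal_enn2real)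
      moreover have "enn2real (f x) \<le> 1 / \<alpha>"
        using elim \<alpha> by (simp add: enn2real_leI)
      ultimately show ?case by (simp add: g_def min_def)
    qed
  qed
  then show ?thesis
    using that[of g] \<alpha> Q_eq by (auto simp: g_def)
qed

definition weighted_sample :: "nat \<Rightarrow> (nat \<Rightarrow> real) \<Rightarrow> (nat \<Rightarrow> 'a::euclidean_space) \<Rightarrow> 'a measure" where
  "weighted_sample n w p = distr (density (count_space {..<n}) (\<lambda>i. ennreal (w i))) borel p"

lemma sets_weighted_sample[simp]: "sets (weighted_sample n w p) = sets borel"
  by (simp add: weighted_sample_def)

lemma space_weighted_sample[simp]: "space (weighted_sample n w p) = UNIV"
  by (simp add: weighted_sample_def)

lemma emeasure_weighted_sample:
  assumes B: "B \<in> sets borel" and w: "\<And>i. 0 \<le> w i"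
  shows "emeasure (weighted_sample n w p) B = ennreal (\<Sum>i<n. w i * indicator B (p i))"
proof -
  have "emeasure (weighted_sample n w p) B = (\<Sum>i<n. ennreal (w i) * indicator (p -` B \<inter> {..<n}) i)"
    using B by (simp add: weighted_sample_def emeasure_distr emeasure_density nn_integral_count_space_finite)
  also have "\<dots> = (\<Sum>i<n. ennreal (w i * indicator B (p i)))"
    by (rule sum.cong) (auto simp: indicator_def)
  also have "\<dots> = ennreal (\<Sum>i<n. w i * indicator B (p i))"
    using w by (subst sum_ennreal) auto
  finally show ?thesis .
qed

lemma measure_weighted_sample:
  assumes "B \<in> sets borel" and w: "\<And>i. 0 \<le> w i"
  shows "measure (weighted_sample n w p) B = (\<Sum>i<n. w i * indicator B (p i))"
  using w by (simp add: measure_def emeasure_weighted_sample[OF assms] sum_nonneg)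

lemma prob_space_weighted_sample:
  assumes w: "\<And>i. 0 \<le> w i" and sum_w: "(\<Sum>i<n. w i) = 1"
  shows "prob_space (weighted_sample n w p)"
  by (rule prob_spaceI) (simp add: emeasure_weighted_sample[OF _ w] sum_w)

lemma integral_weighted_sample:
  assumes w: "\<And>i. 0 \<le> w i" and f[measurable]: "f \<in> borel_measurable borel"
  shows "integral\<^sup>L (weighted_sample n w p) f = (\<Sum>i<n. w i * f (p i))"
  using w by (simp add: weighted_sample_def integral_distr integral_density lebesgue_integral_count_space_finite)

lemma empirical_eq_weighted_sample:
  fixes X :: "nat \<Rightarrow> 'w \<Rightarrow> 'a::euclidean_space"
  shows "empirical X n \<omega> = weighted_sample n (\<lambda>_. 1 / n) (\<lambda>i. X i \<omega>)"
proof -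
  have "empirical X n \<omega> = measure_of UNIV (sets borel) (emeasure (weighted_sample n (\<lambda>_. 1 / n) (\<lambda>i. X i \<omega>)))"
    unfolding empirical_def
  proof (rule measure_of_eq)
    fix B :: "'a set" assume "B \<in> sigma_sets UNIV (sets borel)"
    then have B: "B \<in> sets borel" by (metis sets.sigma_sets_eq space_borel)
    have "real (card {i. i < n \<and> X i \<omega> \<in> B}) = (\<Sum>i<n. indicator B (X i \<omega>))"
      by (simp add: indicator_def sum.If_cases Collect_conj_eq lessThan_def Int_commute)
    then show "ennreal (real (card {i. i < n \<and> X i \<omega> \<in> B}) / real n) =
        emeasure (weighted_sample n (\<lambda>_. 1 / n) (\<lambda>i. X i \<omega>)) B"
      by (simp add: emeasure_weighted_sample[OF B] sum_divide_distrib)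
  qed simp
  also have "\<dots> = weighted_sample n (\<lambda>_. 1 / n) (\<lambda>i. X i \<omega>)"
    using measure_of_of_measure[of "weighted_sample n (\<lambda>_. 1 / n) (\<lambda>i. X i \<omega>)"] by simp
  finally show ?thesis .
qed

lemma weighted_sample_in_trimming:
  assumes w: "\<And>i. 0 \<le> w i" "\<And>i. w i \<le> 1 / (n * \<alpha>)" and sum_w: "(\<Sum>i<n. w i) = 1"
  shows "weighted_sample n w p \<in> trimming (weighted_sample n (\<lambda>_. 1 / n) p) \<alpha>"
  unfolding trimming_def prob_measures_def
proof (intro CollectI conjI ballI)
  show "prob_space (weighted_sample n w p)" by (rule prob_space_weighted_sample[OF w(1) sum_w])
  fix B :: "'a set" assume B: "B \<in> sets borel"
  have "measure (weighted_sample n w p) B = (\<Sum>i<n. w i * indicator B (p i))"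
    by (rule measure_weighted_sample[OF B w(1)])
  also have "\<dots> \<le> (\<Sum>i<n. 1 / (n * \<alpha>) * indicator B (p i))"
    by (intro sum_mono mult_right_mono w(2)) auto
  also have "\<dots> = measure (weighted_sample n (\<lambda>_. 1 / n) p) B / \<alpha>"
    by (simp add: measure_weighted_sample[OF B] sum_divide_distrib)
  finally show "measure (weighted_sample n w p) B \<le> measure (weighted_sample n (\<lambda>_. 1 / n) p) B / \<alpha>" .
qed simp

lemma integral_empirical_sample:
  assumes "f \<in> borel_measurable borel"
  shows "integral\<^sup>L (weighted_sample n (\<lambda>_. 1 / n) p) f = sample_mean p f n"
  by (simp add: integral_weighted_sample[OF _ assms] sample_mean_def sum_divide_distrib)

text \<open>The mixing parameter: for \<open>c > 0\<close> the largest \<open>t \<in> [0,1]\<close> with \<open>t (1 - \<alpha> c) \<le> c (1 - \<alpha>)\<close>,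
  which is exactly what keeps the mixture \<open>t/c \<cdot> x + (1 - t)\<close> of weights below \<open>1/\<alpha>\<close>.\<close>
definition mix_weight :: "real \<Rightarrow> real \<Rightarrow> real" where
  "mix_weight \<alpha> c =
     (if c \<le> 0 then 0 else if 1 \<le> \<alpha> * c then 1 else min 1 (c * (1 - \<alpha>) / (1 - \<alpha> * c)))"

lemma mix_weight_bounds:
  fixes c :: real
  assumes \<alpha>: "0 < \<alpha>" "\<alpha> \<le> 1" and x: "0 \<le> x" "x \<le> 1 / \<alpha>"
  defines "t \<equiv> mix_weight \<alpha> c"
  shows "0 \<le> t / c * x + (1 - t)" and "t / c * x + (1 - t) \<le> 1 / \<alpha>"
proof -
  have t: "0 \<le> t" "t \<le> 1"
    using \<alpha> by (auto simp: t_def mix_weight_def)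
  show "0 \<le> t / c * x + (1 - t)"
    using t x by (cases "c \<le> 0") (auto simp: t_def mix_weight_def)
  show "t / c * x + (1 - t) \<le> 1 / \<alpha>"
  proof (cases "c \<le> 0")
    case True
    then show ?thesis using \<alpha> by (simp add: t_def mix_weight_def)
  next
    case False
    then have c: "c > 0" by simp
    have key: "t * (1 - \<alpha> * c) \<le> c * (1 - \<alpha>)"
    proof (cases "1 \<le> \<alpha> * c")
      case True
      then have "t * (1 - \<alpha> * c) \<le> 0"
        using t by (simp add: mult_nonneg_nonpos)
      also have "0 \<le> c * (1 - \<alpha>)"
        using c \<alpha> by simp
      finally show ?thesis .
    next
      case False
      then have "t \<le> c * (1 - \<alpha>) / (1 - \<alpha> * c)"
        using c by (simp add: t_def mix_weight_def)
      then show ?thesis using False by (simp add: pos_le_divide_eq)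
    qed
    have "t / c * x \<le> t / c * (1 / \<alpha>)"
      using t x c by (intro mult_left_mono) auto
    moreover have "t / c * (1 / \<alpha>) + (1 - t) = (t + (1 - t) * \<alpha> * c) / (\<alpha> * c)"
      using \<alpha> c by (simp add: field_simps)
    moreover have "(t + (1 - t) * \<alpha> * c) / (\<alpha> * c) \<le> c / (\<alpha> * c)"
      using key \<alpha> c by (intro divide_right_mono) (auto simp: algebra_simps)
    moreover have "c / (\<alpha> * c) = 1 / \<alpha>"
      using c by simp
    ultimately show ?thesis by linarith
  qed
qed

lemma mix_weight_tendsto:
  assumes \<alpha>: "0 < \<alpha>" "\<alpha> < 1" and c: "(c \<longlongrightarrow> 1) F"
  shows "((\<lambda>x. mix_weight \<alpha> (c x)) \<longlongrightarrow> 1) F"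
proof (rule tendsto_sandwich)
  have "eventually (\<lambda>x. c x > 0) F" using c by (intro order_tendstoD(1)) auto
  then show "eventually (\<lambda>x. min 1 (c x * (1 - \<alpha>) / (1 - \<alpha> * c x)) \<le> mix_weight \<alpha> (c x)) F"
    by eventually_elim (auto simp: mix_weight_def)
  show "eventually (\<lambda>x. mix_weight \<alpha> (c x) \<le> 1) F"
    by (auto simp: mix_weight_def)
  have "((\<lambda>x. min 1 (c x * (1 - \<alpha>) / (1 - \<alpha> * c x))) \<longlongrightarrow> min 1 (1 * (1 - \<alpha>) / (1 - \<alpha> * 1))) F"
    using \<alpha> by (intro tendsto_intros c) auto
  then show "((\<lambda>x. min 1 (c x * (1 - \<alpha>) / (1 - \<alpha> * c x))) \<longlongrightarrow> 1) F"
    using \<alpha> by simp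
qed simp

lemma reweighted_sample_weak_conv:
  fixes p :: "nat \<Rightarrow> 'a::euclidean_space" and P Q :: "'a measure" and g :: "'a \<Rightarrow> real"
  assumes \<alpha>: "0 < \<alpha>" "\<alpha> < 1" and sets_P: "sets P = sets borel"
    and g[measurable]: "g \<in> borel_measurable borel" and g_nonneg: "\<And>x. 0 \<le> g x"
    and g_le: "\<And>x. g x \<le> 1 / \<alpha>"
    and Q: "Q = density P (\<lambda>x. ennreal (g x))" and Q_prob: "prob_space Q"
    and conv_g: "\<And>f. continuous_on UNIV f \<Longrightarrow> bounded (range f) \<Longrightarrow>
        sample_mean p (\<lambda>x. f x * g x) \<longlonglongrightarrow> (\<integral>x. f x * g x \<partial>P)"
    and conv_1: "\<And>f. continuous_on UNIV f \<Longrightarrow> bounded (range f) \<Longrightarrow>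
        sample_mean p f \<longlonglongrightarrow> (\<integral>x. f x \<partial>P)"
  shows "\<exists>Qs. (\<forall>n\<ge>1. Qs n \<in> trimming (weighted_sample n (\<lambda>_. 1 / n) p) \<alpha>) \<and> weakly_conv Qs Q"
proof -
  have integral_Q: "integral\<^sup>L Q f = (\<integral>x. f x * g x \<partial>P)" if [measurable]: "f \<in> borel_measurable borel" for f
    unfolding Q using sets_P g_nonneg
    by (subst integral_density) (auto simp: measurable_cong_sets[OF sets_P refl] mult.commute)
  define c where "c n = sample_mean p g n" for n
  define t where "t n = mix_weight \<alpha> (c n)" for n
  define w where "w n i = (t n / c n * g (p i) + (1 - t n)) / n" for n i
  note bounds = mix_weight_bounds[OF \<alpha>(1) less_imp_le[OF \<alpha>(2)] g_nonneg g_le, of "c n" for n]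
  have w_nonneg: "0 \<le> w n i" for n i
    using bounds(1) by (simp add: w_def t_def)
  have w_le: "w n i \<le> 1 / (n * \<alpha>)" for n i
  proof -
    have "w n i \<le> (1 / \<alpha>) / n"
      unfolding w_def t_def by (rule divide_right_mono[OF bounds(2)]) simp
    then show ?thesis by (simp add: mult.commute)
  qed
  have sum_w: "(\<Sum>i<n. w n i) = 1" if "n \<ge> 1" for n
  proof -
    have sum_g: "(\<Sum>i<n. g (p i)) = n * c n"
      using that by (simp add: c_def sample_mean_def)
    have "(\<Sum>i<n. w n i) = (t n / c n * (\<Sum>i<n. g (p i)) + n * (1 - t n)) / n"
      by (simp add: w_def sum_divide_distrib[symmetric] sum.distrib sum_distrib_left)
    also have "\<dots> = 1"
      unfolding sum_g using that by (cases "c n = 0") (auto simp: t_def mix_weight_def field_simps)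
    finally show ?thesis .
  qed
  have "c \<longlonglongrightarrow> (\<integral>x. 1 * g x \<partial>P)"
    unfolding c_def using conv_g[of "\<lambda>_. 1"] by simp
  moreover have "(\<integral>x. 1 * g x \<partial>P) = 1"
    using integral_Q[of "\<lambda>_. 1"] prob_space.prob_space[OF Q_prob] by simp
  ultimately have c: "c \<longlonglongrightarrow> 1" by simp
  have t: "t \<longlonglongrightarrow> 1"
    unfolding t_def by (rule mix_weight_tendsto[OF \<alpha> c])
  have "weakly_conv (\<lambda>n. weighted_sample n (w n) p) Q"
    unfolding weakly_conv_def
  proof (intro allI impI)
    fix f :: "'a \<Rightarrow> real" assume f: "continuous_on UNIV f \<and> bounded (range f)"
    then have [measurable]: "f \<in> borel_measurable borel" by (intro borel_measurable_continuous_onI) simp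
    have "integral\<^sup>L (weighted_sample n (w n) p) f = (\<Sum>i<n. w n i * f (p i))" for n
      by (rule integral_weighted_sample[OF w_nonneg]) measurable
    also have "\<dots> n = (\<Sum>i<n. t n / c n * (f (p i) * g (p i) / n) + (1 - t n) * (f (p i) / n))" for n
      unfolding w_def by (intro sum.cong refl) (simp add: add_divide_distrib distrib_right)
    also have "\<dots> n = t n / c n * sample_mean p (\<lambda>x. f x * g x) n + (1 - t n) * sample_mean p f n" for n
      by (simp add: sample_mean_def sum.distrib sum_distrib_left sum_divide_distrib)
    finally have integral_Qs: "integral\<^sup>L (weighted_sample n (w n) p) f =
        t n / c n * sample_mean p (\<lambda>x. f x * g x) n + (1 - t n) * sample_mean p f n" for n .
    have "(\<lambda>n. t n / c n * sample_mean p (\<lambda>x. f x * g x) n + (1 - t n) * sample_mean p f n)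
        \<longlonglongrightarrow> 1 / 1 * (\<integral>x. f x * g x \<partial>P) + (1 - 1) * (\<integral>x. f x \<partial>P)"
      using f by (intro tendsto_intros t c conv_g conv_1) auto
    then show "(\<lambda>n. integral\<^sup>L (weighted_sample n (w n) p) f) \<longlonglongrightarrow> integral\<^sup>L Q f"
      by (simp add: integral_Q integral_Qs)
  qed
  moreover have "weighted_sample n (w n) p \<in> trimming (weighted_sample n (\<lambda>_. 1 / n) p) \<alpha>"
    if "n \<ge> 1" for n
    using weighted_sample_in_trimming[OF w_nonneg w_le sum_w[OF that]] .
  ultimately show ?thesis
    by (intro exI[of _ "\<lambda>n. weighted_sample n (w n) p"]) simp
qed

lemma empirical_sample_witness:
  assumes \<alpha>: "0 < \<alpha>" "\<alpha> \<le> 1"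
    and conv: "\<And>f. continuous_on UNIV f \<Longrightarrow> bounded (range f) \<Longrightarrow> sample_mean p f \<longlonglongrightarrow> (\<integral>x. f x \<partial>P)"
  shows "\<exists>Qs. (\<forall>n\<ge>1. Qs n \<in> trimming (weighted_sample n (\<lambda>_. 1 / n) p) \<alpha>) \<and> weakly_conv Qs P"
proof (intro exI conjI allI impI)
  show "weakly_conv (\<lambda>n. weighted_sample n (\<lambda>_. 1 / n) p) P"
    unfolding weakly_conv_def using conv by (simp add: integral_empirical_sample borel_measurable_continuous_onI)
  fix n :: nat assume "n \<ge> 1"
  then show "weighted_sample n (\<lambda>_. 1 / n) p \<in> trimming (weighted_sample n (\<lambda>_. 1 / n) p) \<alpha>"
    using \<alpha> by (intro weighted_sample_in_trimming) (auto simp: frac_le)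
qed

theorem proposition9:
  fixes M :: "'w measure" and X :: "nat \<Rightarrow> 'w \<Rightarrow> 'a::euclidean_space"
    and P Q :: "'a measure" and \<alpha> :: real
  assumes "prob_space M"
    and "prob_space.indep_vars M (\<lambda>_. borel) X UNIV"
    and "\<And>i. X i \<in> borel_measurable M"
    and "\<And>i. distr M borel (X i) = P"
    and "P \<in> prob_measures"
    and "0 < \<alpha>" and "\<alpha> \<le> 1"
    and "Q \<in> trimming P \<alpha>"
  shows "AE \<omega> in M. \<exists>Qs :: nat \<Rightarrow> 'a measure.
           (\<forall>n\<ge>1. Qs n \<in> trimming (empirical X n \<omega>) \<alpha>) \<and> weakly_conv Qs Q"
proof -
  interpret M: prob_space M by fact
  note slln = M.AE_sample_mean_tendsto_bounded_continuous[OF assms(2-4)]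
  have conv: "AE \<omega> in M. \<forall>f. continuous_on UNIV f \<and> bounded (range f) \<longrightarrow>
      sample_mean (\<lambda>i. X i \<omega>) f \<longlonglongrightarrow> (\<integral>x. f x \<partial>P)"
    using slln[of "\<lambda>_. 1" 1] by simp
  show ?thesis
  proof (cases "\<alpha> = 1")
    case True
    then have "Q = P" using trimming_one_eq assms(5,8) by blast
    from conv show ?thesis
      unfolding empirical_eq_weighted_sample \<open>Q = P\<close>
      by eventually_elim (rule empirical_sample_witness[OF assms(6,7)], blast)
  next
    case False
    then have "\<alpha> < 1" using assms(7) by simp
    obtain g where g: "g \<in> borel_measurable borel" "\<And>x. 0 \<le> g x" "\<And>x. g x \<le> 1 / \<alpha>"
      and Q: "Q = density P (\<lambda>x. ennreal (g x))"
      using trimming_density[OF assms(5,6,8)] by blast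
    have sets_P: "sets P = sets borel" and Q_prob: "prob_space Q"
      using assms(5,8) by (auto simp: prob_measures_def trimming_def)
    from conv slln[OF g] show ?thesis
      unfolding empirical_eq_weighted_sample
      by eventually_elim (rule reweighted_sample_weak_conv[OF assms(6) \<open>\<alpha> < 1\<close> sets_P g Q Q_prob]; blast)
  qed
qed

end
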